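(* $Q$ is a Sylow $q$-subgroup of $X$ and $P$ is a Sylow $p$-subgroup of $X$; that is, every finite $q$-subgroup of $X$ is conjugate in $X$ to a subgroup of $Q$, and every finite $p$-subgroup of $X$ is conjugate in $X$ to a subgroup of $P$.
   Context: Let $p$ and $q$ be distinct odd primes. Let $m$ be the smallest positive integer such that $p$ divides $|\mathrm{Sp}(2m,q)|$, and $n$ the smallest positive integer such that $q$ divides $|\mathrm{Sp}(2n,p)|$. Let $Q$ be an extraspecial $q$-group of order $q^{2m+1}$ and exponent $q$, and let $A = Q\rtimes\langle \alpha\rangle$ where $\alpha$ has order $p$, acts trivially on $Z(Q)$ and faithfully on $Q/Z(Q)$. Let $P$ be an extraspecial $p$-group of order $p^{2n+1}$ and exponent $p$, and let $B = P\rtimes\langle\beta\rangle$ where $\beta$ has order $q$, acts trivially on $Z(P)$ and faithfully on $P/Z(P)$. Then $C_A = Z(Q)\times\langle\alpha\rangle$ is a cyclic self-normalizing (nilpotent) subgroup of $A$ of order $pq$, and $C_B = Z(P)\times\langle \beta\rangle$ is a cyclic self-normalizing subgroup of $B$ of order $pq$. Let $X = A *_C B$ be the free product of $A$ and $B$ amalgamated along an isomorphism $C_A\to C_B$ (which necessarily maps $\langle\alpha\rangle$ onto $Z(P)$ and $Z(Q)$ onto $\langle\beta\rangle$); regard $A$, $B$ as subgroups of $X$ with $A\cap B = C = Z(P)\times Z(Q)$. *)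

theory Defs
  imports "HOL-Algebra.Algebra"
begin

text \<open>Standard alternating form J = [[0, I_m], [-I_m, 0]] on F_q^(2m), indices 0..2m-1.\<close>
definition sympJ :: "nat \<Rightarrow> nat \<Rightarrow> nat \<Rightarrow> int" where
  "sympJ m k l = (if k < m \<and> l = k + m then 1 else if l < m \<and> k = l + m then -1 else 0)"

text \<open>Sp(2m,q): the 2m x 2m matrices over Z/qZ (entries represented in 0..q-1, zero outside
  the index range) with M^T J M = J modulo q.\<close>
definition Sp_mats :: "nat \<Rightarrow> int \<Rightarrow> (nat \<Rightarrow> nat \<Rightarrow> int) set" where
  "Sp_mats m q = {M. (\<forall>i j. (2*m \<le> i \<or> 2*m \<le> j) \<longrightarrow> M i j = 0)
      \<and> (\<forall>i j. 0 \<le> M i j \<and> M i j < q)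
      \<and> (\<forall>i<2*m. \<forall>j<2*m.
           (\<Sum>k<2*m. \<Sum>l<2*m. M k i * sympJ m k l * M l j) mod q = sympJ m i j mod q)}"

definition Sp_order :: "nat \<Rightarrow> int \<Rightarrow> nat" where
  "Sp_order m q = card (Sp_mats m q)"

definition sub_center :: "('a, 'b) monoid_scheme \<Rightarrow> 'a set \<Rightarrow> 'a set" where
  "sub_center G H = {z \<in> H. \<forall>h\<in>H. z \<otimes>\<^bsub>G\<^esub> h = h \<otimes>\<^bsub>G\<^esub> z}"

definition maximal_subgroup_of :: "('a, 'b) monoid_scheme \<Rightarrow> 'a set \<Rightarrow> 'a set \<Rightarrow> bool" where
  "maximal_subgroup_of G M H \<longleftrightarrow> subgroup M G \<and> M \<subset> H \<and>
     (\<forall>K. subgroup K G \<longrightarrow> M \<subseteq> K \<longrightarrow> K \<subseteq> H \<longrightarrow> K = M \<or> K = H)"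

definition frattini :: "('a, 'b) monoid_scheme \<Rightarrow> 'a set \<Rightarrow> 'a set" where
  "frattini G H = H \<inter> \<Inter> {M. maximal_subgroup_of G M H}"

definition extraspecial :: "('a, 'b) monoid_scheme \<Rightarrow> nat \<Rightarrow> 'a set \<Rightarrow> bool" where
  "extraspecial G r H \<longleftrightarrow> subgroup H G \<and> finite H \<and> (\<exists>k. card H = r ^ k)
     \<and> card (sub_center G H) = r
     \<and> derived G H = sub_center G H \<and> frattini G H = sub_center G H"

definition has_exponent :: "('a, 'b) monoid_scheme \<Rightarrow> 'a set \<Rightarrow> nat \<Rightarrow> bool" where
  "has_exponent G H e \<longleftrightarrow> (\<forall>x\<in>H. x [^]\<^bsub>G\<^esub> e = \<one>\<^bsub>G\<^esub>)"

definition conj_by :: "('a, 'b) monoid_scheme \<Rightarrow> 'a \<Rightarrow> 'a \<Rightarrow> 'a" where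
  "conj_by G g x = g \<otimes>\<^bsub>G\<^esub> x \<otimes>\<^bsub>G\<^esub> inv\<^bsub>G\<^esub> g"

text \<open>The element a of G (acting by conjugation, of prime order r) normalizes H,
 centralizes Z(H), and the cyclic group <a> acts faithfully on H/Z(H), and H <#> <a> is the
 internal semidirect product H \<rtimes> <a>.\<close>
definition good_action :: "('a, 'b) monoid_scheme \<Rightarrow> 'a set \<Rightarrow> 'a \<Rightarrow> nat \<Rightarrow> bool" where
  "good_action G H a r \<longleftrightarrow> a \<in> carrier G \<and> group.ord G a = r
     \<and> conj_by G a ` H = H
     \<and> H \<inter> generate G {a} = {\<one>\<^bsub>G\<^esub>}
     \<and> (\<forall>z\<in>sub_center G H. a \<otimes>\<^bsub>G\<^esub> z = z \<otimes>\<^bsub>G\<^esub> a)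
     \<and> (\<forall>k::nat. (\<forall>x\<in>H. inv\<^bsub>G\<^esub> x \<otimes>\<^bsub>G\<^esub> conj_by G (a [^]\<^bsub>G\<^esub> k) x \<in> sub_center G H)
                 \<longrightarrow> a [^]\<^bsub>G\<^esub> k = \<one>\<^bsub>G\<^esub>)"

definition alternating :: "'a set \<Rightarrow> 'a set \<Rightarrow> 'a set \<Rightarrow> 'a list \<Rightarrow> bool" where
  "alternating S1 S2 C gs \<longleftrightarrow> gs \<noteq> [] \<and>
     (\<forall>i<length gs. gs ! i \<in> (if even i then S1 - C else S2 - C))"

text \<open>G is the free product of its subgroups A and B amalgamated along C = A \<inter> B:
 G is generated by A \<union> B, and every reduced (alternating) product is nontrivial,
 i.e. the canonical homomorphism A *_C B \<rightarrow> G is an isomorphism (normal form theorem).\<close>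
definition is_amalgamated_product ::
  "('a, 'b) monoid_scheme \<Rightarrow> 'a set \<Rightarrow> 'a set \<Rightarrow> 'a set \<Rightarrow> bool" where
  "is_amalgamated_product G A B C \<longleftrightarrow> group G \<and> subgroup A G \<and> subgroup B G \<and> A \<inter> B = C
     \<and> generate G (A \<union> B) = carrier G
     \<and> (\<forall>gs. (alternating A B C gs \<or> alternating B A C gs)
             \<longrightarrow> foldr (\<otimes>\<^bsub>G\<^esub>) gs \<one>\<^bsub>G\<^esub> \<noteq> \<one>\<^bsub>G\<^esub>)"

end

theory Submission
  imports Defs
begin

(*
  This is Serre's theorem that a finite group acting on a tree fixes a vertex, phrased through
  normal forms. By the normal form theorem every g in A *_C B has a well-defined reduced length:
  the number of letters of a reduced word for g, and 0 for g in C. Take k of maximal length D in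
  the finite subgroup H and cut a reduced word for k in the middle, k = c d. Comparing lengths shows
  that c^-1 H c lies in C if D is even, and in the factor containing the middle letter if D is odd;
  so H is conjugate into A or into B.

  A q-subgroup of A = Q <#> <\<alpha>> lies in Q, because the order p of \<alpha> is prime to q.
  A q-subgroup of B = P <#> <\<beta>> acts on the |P| = p^(2n+1) left cosets of <\<beta>>, so it fixes
  one of them and is conjugate into <\<beta>> = Z(Q). The case of p-subgroups is symmetric.
*)

context group
begin

lemma inv_mult_cancel_left [simp]: "x \<in> carrier G \<Longrightarrow> y \<in> carrier G \<Longrightarrow> inv x \<otimes> (x \<otimes> y) = y"
  by (simp add: m_assoc [symmetric])

lemma mult_inv_cancel_left [simp]: "x \<in> carrier G \<Longrightarrow> y \<in> carrier G \<Longrightarrow> x \<otimes> (inv x \<otimes> y) = y"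
  by (simp add: m_assoc [symmetric])

lemma conj_by_closed [simp]: "g \<in> carrier G \<Longrightarrow> x \<in> carrier G \<Longrightarrow> conj_by G g x \<in> carrier G"
  by (simp add: conj_by_def)

lemma conj_by_mult:
  "g \<in> carrier G \<Longrightarrow> h \<in> carrier G \<Longrightarrow> x \<in> carrier G \<Longrightarrow>
     conj_by G (g \<otimes> h) x = conj_by G g (conj_by G h x)"
  by (simp add: conj_by_def inv_mult_group m_assoc)

lemma group_hom_conj_by: "g \<in> carrier G \<Longrightarrow> group_hom G G (conj_by G g)"
  by (intro group_hom.intro group_hom_axioms.intro is_group homI)
    (simp_all add: conj_by_def m_assoc)

lemma subgroup_conj_by_image: "subgroup H G \<Longrightarrow> g \<in> carrier G \<Longrightarrow> subgroup (conj_by G g ` H) G"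
  using group_hom.subgroup_img_is_subgroup group_hom_conj_by by blast

lemma card_conj_by_image: "H \<subseteq> carrier G \<Longrightarrow> g \<in> carrier G \<Longrightarrow> card (conj_by G g ` H) = card H"
  by (rule card_image, rule inj_onI) (auto simp: conj_by_def subset_iff)

lemma subgroup_nat_pow_closed: "subgroup H G \<Longrightarrow> h \<in> H \<Longrightarrow> h [^] (n::nat) \<in> H"
  by (induction n) (auto intro: subgroup.m_closed subgroup.one_closed)

lemma pow_card_subgroup_eq_one:
  assumes "subgroup K G" "finite K" "x \<in> K"
  shows "x [^] card K = \<one>"
proof -
  interpret K: group "G\<lparr>carrier := K\<rparr>" using subgroup_imp_group[OF assms(1)] .
  show ?thesis
    using K.pow_order_eq_1 assms(3) nat_pow_consistent[of x "card K" K] by (simp add: order_def)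
qed

lemma eq_one_if_pow_coprime:
  assumes "x \<in> carrier G" "x [^] (a::nat) = \<one>" "x [^] (b::nat) = \<one>" "coprime a b"
  shows "x = \<one>"
proof -
  have "ord x dvd a" "ord x dvd b" using assms pow_eq_id by auto
  then have "ord x = 1" using assms(4) coprime_common_divisor_nat by blast
  then show ?thesis using assms(1) ord_eq_1 by blast
qed

lemma conj_by_image_mult:
  "g \<in> carrier G \<Longrightarrow> h \<in> carrier G \<Longrightarrow> H \<subseteq> carrier G \<Longrightarrow>
     conj_by G (g \<otimes> h) ` H = conj_by G g ` conj_by G h ` H"
  by (auto simp: image_image conj_by_mult subset_iff)

lemma subgroup_inv_mem_iff: "subgroup H G \<Longrightarrow> x \<in> carrier G \<Longrightarrow> inv x \<in> H \<longleftrightarrow> x \<in> H"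
  using subgroup.m_inv_closed inv_inv by metis

lemma subgroup_mult_mem_iff_left:
  assumes "subgroup H G" "c \<in> H" "x \<in> carrier G"
  shows "c \<otimes> x \<in> H \<longleftrightarrow> x \<in> H"
proof
  assume "c \<otimes> x \<in> H"
  then have "inv c \<otimes> (c \<otimes> x) \<in> H"
    using subgroup.m_closed[OF assms(1) subgroup.m_inv_closed[OF assms(1,2)]] by blast
  then show "x \<in> H" using assms subgroup.mem_carrier by force
qed (use subgroup.m_closed[OF assms(1,2)] in blast)

end

section \<open>Prime-power subgroups and cosets of a subgroup\<close>

lemma (in group_action) fixed_point_if_prime_power_order:
  assumes "finite (carrier G)" "order G = s ^ k" "Factorial_Ring.prime s"
    and "finite E" "\<not> s dvd card E"
  shows "\<exists>x\<in>E. \<forall>g\<in>carrier G. \<phi> g x = x"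
proof (rule ccontr)
  assume no_fix: "\<not> ?thesis"
  have "s dvd card orb" if orb_in: "orb \<in> orbits G E \<phi>" for orb
  proof -
    obtain x where x: "x \<in> E" and orb: "orb = orbit G \<phi> x"
      using orb_in unfolding orbits_def by blast
    obtain g where g: "g \<in> carrier G" "\<phi> g x \<noteq> x" using no_fix x by blast
    have "orb \<subseteq> E" using orb x element_image unfolding orbit_def by blast
    then have "finite orb" using assms(4) finite_subset by blast
    moreover have "{x, \<phi> g x} \<subseteq> orb" using orb orbit_refl[OF x] g(1) unfolding orbit_def by blast
    ultimately have "card orb \<noteq> 1" using g(2) card_1_singletonE by (metis insert_subset singletonD)
    moreover have "card orb dvd s ^ k"
      using orbit_stabilizer_theorem[OF x] orb assms(2) by (metis dvd_triv_left)
    ultimately show ?thesis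
      using divides_primepow_nat[OF assms(3)] by (metis dvd_power le_0_eq not_gr0 power_0)
  qed
  then have "s dvd (\<Sum>orb\<in>orbits G E \<phi>. card orb)" by (simp add: dvd_sum)
  also have "\<dots> = (\<Sum>orb\<in>orbits G E \<phi>. \<Sum>x\<in>orb. 1)" by simp
  also have "\<dots> = (\<Sum>x\<in>E. 1)" by (rule disjoint_sum[OF assms(4)])
  also have "\<dots> = card E" by simp
  finally show False using assms(5) by blast
qed

context group
begin

lemma lcoset_action:
  assumes M: "subgroup M G" and T: "subgroup T G" and K: "subgroup K G" "K \<subseteq> M"
  defines "E \<equiv> (\<lambda>m. m <#\<^bsub>G\<^esub> T) ` M"
  shows "group_action (G\<lparr>carrier := K\<rparr>) E (\<lambda>x. \<lambda>S\<in>E. x <#\<^bsub>G\<^esub> S)"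
proof -
  let ?\<phi> = "\<lambda>x. \<lambda>S\<in>E. x <#\<^bsub>G\<^esub> S"
  have T_carrier: "T \<subseteq> carrier G" using T subgroup.subset by blast
  have K_carrier: "K \<subseteq> carrier G" using K subgroup.subset by blast
  have in_E: "x <#\<^bsub>G\<^esub> S \<in> E" if "x \<in> K" "S \<in> E" for x S
  proof -
    obtain m where m: "m \<in> M" "S = m <#\<^bsub>G\<^esub> T" using \<open>S \<in> E\<close> unfolding E_def by blast
    then have "x <#\<^bsub>G\<^esub> S = (x \<otimes> m) <#\<^bsub>G\<^esub> T"
      using that K_carrier T_carrier subgroup.mem_carrier[OF M]
      by (simp add: lcos_m_assoc subset_iff)
    moreover have "x \<otimes> m \<in> M" using that(1) K(2) m(1) subgroup.m_closed[OF M] by blast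
    ultimately show ?thesis unfolding E_def by blast
  qed
  have E_carrier: "S \<subseteq> carrier G" if "S \<in> E" for S
    using that T_carrier subgroup.mem_carrier[OF M] l_coset_subset_G unfolding E_def by blast
  have mult: "?\<phi> (x \<otimes> y) S = ?\<phi> x (?\<phi> y S)" if "x \<in> K" "y \<in> K" "S \<in> E" for x y S
    using that in_E E_carrier K_carrier by (auto simp: lcos_m_assoc subset_iff)
  have bij: "?\<phi> x \<in> Bij E" if x: "x \<in> K" for x
  proof -
    have inv_x: "inv x \<in> K" using subgroup.m_inv_closed[OF K(1) x] .
    have "bij_betw (?\<phi> x) E E"
    proof (rule bij_betwI[where g = "?\<phi> (inv x)"])
      show "?\<phi> x \<in> E \<rightarrow> E" "?\<phi> (inv x) \<in> E \<rightarrow> E" using in_E x inv_x by auto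
    next
      fix S assume "S \<in> E"
      then show "?\<phi> (inv x) (?\<phi> x S) = S" "?\<phi> x (?\<phi> (inv x) S) = S"
        using mult[OF inv_x x \<open>S \<in> E\<close>] mult[OF x inv_x \<open>S \<in> E\<close>] x inv_x K_carrier E_carrier
        by (auto simp: lcos_mult_one subset_iff)
    qed
    then show ?thesis unfolding Bij_def by simp
  qed
  show ?thesis
  proof (unfold group_action_def, intro group_hom.intro group_hom_axioms.intro homI)
    show "group (G\<lparr>carrier := K\<rparr>)" using subgroup_imp_group[OF K(1)] .
    show "group (BijGroup E)" by (rule group_BijGroup)
    show "?\<phi> x \<in> carrier (BijGroup E)" if "x \<in> carrier (G\<lparr>carrier := K\<rparr>)" for x
      using bij that by (simp add: BijGroup_def)
    show "?\<phi> (x \<otimes>\<^bsub>G\<lparr>carrier := K\<rparr>\<^esub> y) = ?\<phi> x \<otimes>\<^bsub>BijGroup E\<^esub> ?\<phi> y"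
      if "x \<in> carrier (G\<lparr>carrier := K\<rparr>)" "y \<in> carrier (G\<lparr>carrier := K\<rparr>)" for x y
    proof -
      have "x \<in> K" "y \<in> K" using that by simp_all
      then have "?\<phi> (x \<otimes> y) = compose E (?\<phi> x) (?\<phi> y)"
        using mult by (intro ext) (simp add: compose_def)
      then show ?thesis using bij \<open>x \<in> K\<close> \<open>y \<in> K\<close> by (simp add: BijGroup_def)
    qed
  qed
qed

(*
  K acts on the left cosets m T (m in M), whose number is prime to s; a fixed coset y T
  gives y^-1 K y \<subseteq> T.
*)
lemma prime_power_subgroup_conj_into_subgroup:
  assumes M: "subgroup M G" and T: "subgroup T G"
    and K: "subgroup K G" "K \<subseteq> M" "card K = s ^ k" and s: "Factorial_Ring.prime s"
    and index: "\<not> s dvd card ((\<lambda>m. m <#\<^bsub>G\<^esub> T) ` M)"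
  shows "\<exists>y\<in>M. conj_by G (inv y) ` K \<subseteq> T"
proof -
  define E where "E = (\<lambda>m. m <#\<^bsub>G\<^esub> T) ` M"
  have finite_K: "finite K"
    using K(3) prime_gt_0_nat[OF s] by (metis card.infinite nat_less_le power_not_zero)
  have finite_E: "finite E" using index unfolding E_def by (metis card.infinite dvd_0_right)
  interpret group_action "G\<lparr>carrier := K\<rparr>" E "\<lambda>x. \<lambda>S\<in>E. x <#\<^bsub>G\<^esub> S"
    unfolding E_def using lcoset_action[OF M T K(1,2)] .
  obtain S where "S \<in> E" and fixed: "\<forall>x\<in>K. (\<lambda>S\<in>E. x <#\<^bsub>G\<^esub> S) S = S"
    using fixed_point_if_prime_power_order[OF _ _ s finite_E, of k] finite_K K(3) index
    unfolding order_def E_def[symmetric] by auto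
  then obtain y where y: "y \<in> M" "S = y <#\<^bsub>G\<^esub> T" unfolding E_def by blast
  have "conj_by G (inv y) x \<in> T" if x: "x \<in> K" for x
  proof -
    have carrier: "x \<in> carrier G" "y \<in> carrier G" "T \<subseteq> carrier G"
      using subgroup.mem_carrier[OF K(1) x] subgroup.mem_carrier[OF M y(1)] subgroup.subset[OF T]
      by simp_all
    have "(x \<otimes> y) <#\<^bsub>G\<^esub> T = y <#\<^bsub>G\<^esub> T"
      using fixed x \<open>S \<in> E\<close> y(2) carrier lcos_m_assoc[of T x y] by simp
    then have "x \<otimes> y \<in> y <#\<^bsub>G\<^esub> T" using lcos_self[OF _ T] carrier by (metis m_closed)
    then have "inv y \<otimes> (x \<otimes> y) \<in> T" using subgroup.lcos_module_imp[OF T is_group] carrier by blast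
    then show ?thesis using carrier by (simp add: conj_by_def m_assoc)
  qed
  then show ?thesis using y(1) by blast
qed

end

section \<open>Semidirect decompositions\<close>

lemma (in group) conj_by_generate_closed:
  assumes a: "a \<in> carrier G" "ord a \<noteq> 0" and N: "N \<subseteq> carrier G" "conj_by G a ` N \<subseteq> N"
    and "\<sigma> \<in> generate G {a}" "y \<in> N"
  shows "conj_by G \<sigma> y \<in> N"
proof -
  obtain k :: nat where "\<sigma> = a [^] k" using assms(5) generate_pow_nat[OF a] by blast
  moreover have "conj_by G (a [^] k) y \<in> N" for k :: nat
    using \<open>y \<in> N\<close>
  proof (induction k arbitrary: y)
    case (Suc k)
    then have "conj_by G a y \<in> N" using N(2) by blast
    then show ?case using Suc a(1) N(1) by (auto simp: conj_by_mult)
  qed (use N(1) in \<open>auto simp: conj_by_def\<close>)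
  ultimately show ?thesis by blast
qed

locale semidirect_decomposition = group G for G (structure) +
  fixes N T :: "'a set"
  assumes subgroup_N: "subgroup N G" and subgroup_T: "subgroup T G"
    and normalizes: "\<And>\<sigma> y. \<sigma> \<in> T \<Longrightarrow> y \<in> N \<Longrightarrow> conj_by G \<sigma> y \<in> N"
    and N_inter_T: "N \<inter> T = {\<one>}"
begin

lemma N_carrier: "N \<subseteq> carrier G" and T_carrier: "T \<subseteq> carrier G"
  using subgroup_N subgroup_T subgroup.subset by blast+

lemma card_lcosets_eq_card_N: "card ((\<lambda>m. m <#\<^bsub>G\<^esub> T) ` (N <#> T)) = card N"
proof -
  have coset_eq: "(y \<otimes> \<sigma>) <#\<^bsub>G\<^esub> T = y <#\<^bsub>G\<^esub> T" if "y \<in> N" "\<sigma> \<in> T" for y \<sigma>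
  proof -
    have "\<sigma> <#\<^bsub>G\<^esub> T = T"
      using l_repr_independence[of \<sigma> \<one> T] lcos_mult_one[OF T_carrier] that(2) subgroup_T
      by (simp add: T_carrier subset_iff)
    then show ?thesis using that N_carrier T_carrier lcos_m_assoc[of T y \<sigma>] by auto
  qed
  have "(\<lambda>m. m <#\<^bsub>G\<^esub> T) ` (N <#> T) = (\<Union>y\<in>N. \<Union>\<sigma>\<in>T. {(y \<otimes> \<sigma>) <#\<^bsub>G\<^esub> T})"
    unfolding set_mult_def by blast
  also have "\<dots> = (\<Union>y\<in>N. \<Union>\<sigma>\<in>T. {y <#\<^bsub>G\<^esub> T})" using coset_eq by simp
  also have "\<dots> = (\<lambda>y. y <#\<^bsub>G\<^esub> T) ` N" using subgroup.one_closed[OF subgroup_T] by blast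
  finally have "(\<lambda>m. m <#\<^bsub>G\<^esub> T) ` (N <#> T) = (\<lambda>y. y <#\<^bsub>G\<^esub> T) ` N" .
  moreover have "inj_on (\<lambda>y. y <#\<^bsub>G\<^esub> T) N"
  proof (rule inj_onI)
    fix y y' assume y: "y \<in> N" "y' \<in> N" and eq: "y <#\<^bsub>G\<^esub> T = y' <#\<^bsub>G\<^esub> T"
    have carrier: "y \<in> carrier G" "y' \<in> carrier G" using y N_carrier by auto
    then have "inv y \<otimes> y' \<in> T"
      using eq lcos_self[OF _ subgroup_T] subgroup.lcos_module_imp[OF subgroup_T is_group] by metis
    moreover have "inv y \<otimes> y' \<in> N"
      using y subgroup.m_closed[OF subgroup_N] subgroup.m_inv_closed[OF subgroup_N] by blast
    ultimately have "inv y \<otimes> y' = \<one>" using N_inter_T by blast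
    then show "y = y'" using carrier inv_solve_left'[of \<one> y y'] by simp
  qed
  ultimately show ?thesis by (simp add: card_image)
qed

lemma pow_mult_decomposition:
  fixes n :: nat
  assumes "y \<in> N" "\<sigma> \<in> T"
  shows "\<exists>y'\<in>N. (y \<otimes> \<sigma>) [^] n = y' \<otimes> \<sigma> [^] n"
proof (induction n)
  case 0
  show ?case using subgroup.one_closed[OF subgroup_N] by force
next
  case (Suc n)
  then obtain y' where y': "y' \<in> N" "(y \<otimes> \<sigma>) [^] n = y' \<otimes> \<sigma> [^] n" by blast
  have carrier: "y \<in> carrier G" "\<sigma> \<in> carrier G" "y' \<in> carrier G"
    using assms y'(1) N_carrier T_carrier by auto
  have "\<sigma> [^] n \<in> T" using subgroup_nat_pow_closed[OF subgroup_T assms(2)] .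
  then have conj: "conj_by G (\<sigma> [^] n) y \<in> N" using normalizes assms(1) by blast
  have "(y \<otimes> \<sigma>) [^] Suc n = (y' \<otimes> conj_by G (\<sigma> [^] n) y) \<otimes> \<sigma> [^] Suc n"
    using y'(2) carrier by (simp add: conj_by_def m_assoc nat_pow_mult[symmetric])
  then show ?case using subgroup.m_closed[OF subgroup_N y'(1) conj] by blast
qed

lemma subset_N_if_coprime:
  assumes K: "subgroup K G" "finite K" "K \<subseteq> N <#> T" and "finite T" "coprime (card K) (card T)"
  shows "K \<subseteq> N"
proof
  fix x assume x: "x \<in> K"
  then obtain y \<sigma> where y\<sigma>: "y \<in> N" "\<sigma> \<in> T" "x = y \<otimes> \<sigma>"
    using K(3) unfolding set_mult_def by blast
  have carrier: "y \<in> carrier G" "\<sigma> \<in> carrier G" using y\<sigma> N_carrier T_carrier by auto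
  obtain y' where y': "y' \<in> N" "x [^] card K = y' \<otimes> \<sigma> [^] card K"
    using pow_mult_decomposition[OF y\<sigma>(1,2)] y\<sigma>(3) by blast
  have "x [^] card K = \<one>" using pow_card_subgroup_eq_one[OF K(1,2) x] .
  then have "\<sigma> [^] card K = inv y'"
    using y' N_carrier carrier inv_solve_left[of "\<sigma> [^] card K" y' \<one>] by auto
  moreover have "inv y' \<in> N" using subgroup.m_inv_closed[OF subgroup_N y'(1)] .
  moreover have "\<sigma> [^] card K \<in> T" using subgroup_nat_pow_closed[OF subgroup_T y\<sigma>(2)] .
  ultimately have "\<sigma> [^] card K \<in> N \<inter> T" by simp
  then have "\<sigma> [^] card K = \<one>" using N_inter_T by simp
  moreover have "\<sigma> [^] card T = \<one>" using pow_card_subgroup_eq_one[OF subgroup_T \<open>finite T\<close> y\<sigma>(2)] .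
  ultimately have "\<sigma> = \<one>" using eq_one_if_pow_coprime carrier(2) assms(5) by blast
  then show "x \<in> N" using y\<sigma> carrier by simp
qed

end

lemma semidirect_decomposition_good_action:
  fixes G (structure)
  assumes "group G" "subgroup N G" "good_action G N a r" "0 < r"
  shows "semidirect_decomposition G N (generate G {a})"
proof -
  interpret group G by fact
  have a: "a \<in> carrier G" "ord a = r" "conj_by G a ` N = N" "N \<inter> generate G {a} = {\<one>}"
    using assms(3) unfolding good_action_def by auto
  have "ord a \<noteq> 0" using a(2) assms(4) by simp
  show ?thesis
  proof (intro semidirect_decomposition.intro semidirect_decomposition_axioms.intro)
    show "subgroup (generate G {a}) G" using generate_is_subgroup a(1) by simp
    show "conj_by G \<sigma> y \<in> N" if "\<sigma> \<in> generate G {a}" "y \<in> N" for \<sigma> y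
      using conj_by_generate_closed[OF a(1) \<open>ord a \<noteq> 0\<close> subgroup.subset[OF assms(2)]] a(3) that
      by blast
  qed (use assms a(4) in auto)
qed

section \<open>Normal forms in amalgamated free products\<close>

context group
begin

definition word_prod :: "'a list \<Rightarrow> 'a" where
  "word_prod xs = foldr (\<otimes>) xs \<one>"

lemma word_prod_Nil [simp]: "word_prod [] = \<one>"
  and word_prod_Cons [simp]: "word_prod (x # xs) = x \<otimes> word_prod xs"
  by (simp_all add: word_prod_def)

lemma word_prod_closed: "set xs \<subseteq> carrier G \<Longrightarrow> word_prod xs \<in> carrier G"
  by (induction xs) auto

lemma word_prod_append:
  "set xs \<subseteq> carrier G \<Longrightarrow> set ys \<subseteq> carrier G \<Longrightarrow> word_prod (xs @ ys) = word_prod xs \<otimes> word_prod ys"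
  by (induction xs) (auto simp: m_assoc word_prod_closed)

lemma inv_word_prod:
  "set xs \<subseteq> carrier G \<Longrightarrow> inv (word_prod xs) = word_prod (rev (map (\<lambda>x. inv x) xs))"
proof (induction xs)
  case (Cons x xs)
  have "set (rev (map (\<lambda>x. inv x) xs)) \<subseteq> carrier G" using Cons.prems by auto
  then show ?case
    using Cons by (simp add: inv_mult_group word_prod_closed word_prod_append)
qed simp

end

locale amalgamated_product = group G for G (structure) +
  fixes A B C :: "'a set"
  assumes subgroup_A: "subgroup A G" and subgroup_B: "subgroup B G" and A_inter_B: "A \<inter> B = C"
    and generate_A_B: "generate G (A \<union> B) = carrier G"
    and alternating_prod_ne_one:
      "\<And>gs. alternating A B C gs \<or> alternating B A C gs \<Longrightarrow> foldr (\<otimes>) gs \<one> \<noteq> \<one>"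

lemma amalgamated_productI: "is_amalgamated_product G A B C \<Longrightarrow> amalgamated_product G A B C"
  unfolding is_amalgamated_product_def amalgamated_product_def amalgamated_product_axioms_def
  by blast

lemma amalgamated_product_swap: "amalgamated_product G A B C \<Longrightarrow> amalgamated_product G B A C"
  unfolding amalgamated_product_def amalgamated_product_axioms_def by (auto simp: Un_commute)

context amalgamated_product
begin

lemma A_carrier: "A \<subseteq> carrier G" and B_carrier: "B \<subseteq> carrier G"
  using subgroup_A subgroup_B subgroup.subset by blast+

lemma subgroup_C: "subgroup C G"
  using subgroups_Inter_pair[OF subgroup_A subgroup_B] A_inter_B by simp

lemma C_subset_A: "C \<subseteq> A" and C_subset_B: "C \<subseteq> B"
  using A_inter_B by blast+

lemma A_B_carrier: "x \<in> A \<union> B \<Longrightarrow> x \<in> carrier G"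
  using A_carrier B_carrier by blast

definition alternates :: "'a \<Rightarrow> 'a \<Rightarrow> bool" where
  "alternates x y \<longleftrightarrow> (x \<in> A \<longleftrightarrow> y \<notin> A)"

definition reduced :: "'a list \<Rightarrow> bool" where
  "reduced xs \<longleftrightarrow> set xs \<subseteq> (A \<union> B) - C \<and> successively alternates xs"

definition factor_of :: "'a \<Rightarrow> 'a set" where
  "factor_of x = (if x \<in> A then A else B)"

lemma subgroup_factor_of: "subgroup (factor_of x) G"
  using subgroup_A subgroup_B by (simp add: factor_of_def)

lemma C_subset_factor_of: "C \<subseteq> factor_of x"
  using C_subset_A C_subset_B by (simp add: factor_of_def)

lemma factor_of_subset: "factor_of x \<subseteq> A \<union> B"
  by (simp add: factor_of_def)

lemma mem_factor_of: "x \<in> A \<union> B \<Longrightarrow> x \<in> factor_of x"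
  by (auto simp: factor_of_def)

lemma alternates_iff_not_mem_factor_of: "u \<in> (A \<union> B) - C \<Longrightarrow> alternates u x \<longleftrightarrow> u \<notin> factor_of x"
  using A_inter_B by (auto simp: alternates_def factor_of_def)

lemma reduced_carrier: "reduced xs \<Longrightarrow> set xs \<subseteq> carrier G"
  unfolding reduced_def using A_B_carrier by blast

lemma reduced_Nil [simp]: "reduced []"
  by (simp add: reduced_def)

lemma reduced_Cons:
  "reduced (x # xs) \<longleftrightarrow> x \<in> (A \<union> B) - C \<and> reduced xs \<and> (xs = [] \<or> alternates x (hd xs))"
  unfolding reduced_def using successively_Cons[of alternates x xs] by auto

lemma reduced_append:
  "reduced (xs @ ys) \<longleftrightarrow>
     reduced xs \<and> reduced ys \<and> (xs = [] \<or> ys = [] \<or> alternates (last xs) (hd ys))"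
  unfolding reduced_def using successively_append_iff[of alternates xs ys] by auto

lemma reduced_imp_alternating:
  assumes "reduced xs" "xs \<noteq> []"
  shows "alternating A B C xs \<or> alternating B A C xs"
proof -
  have letters: "xs ! i \<in> (A \<union> B) - C" if "i < length xs" for i
    using assms(1) that nth_mem unfolding reduced_def by blast
  have parity: "xs ! i \<in> A \<longleftrightarrow> (even i \<longleftrightarrow> hd xs \<in> A)" if "i < length xs" for i
    using that
  proof (induction i)
    case 0
    then show ?case using assms(2) by (simp add: hd_conv_nth)
  next
    case (Suc i)
    then have "alternates (xs ! i) (xs ! Suc i)"
      using assms(1) successively_nth unfolding reduced_def by fastforce
    then show ?case using Suc by (auto simp: alternates_def)
  qed
  show ?thesis
  proof (cases "hd xs \<in> A")
    case True
    then have "alternating A B C xs" using assms(2) letters parity unfolding alternating_def by auto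
    then show ?thesis ..
  next
    case False
    then have "alternating B A C xs" using assms(2) letters parity unfolding alternating_def by auto
    then show ?thesis ..
  qed
qed

lemma word_prod_reduced_ne_one: "reduced xs \<Longrightarrow> xs \<noteq> [] \<Longrightarrow> word_prod xs \<noteq> \<one>"
  using reduced_imp_alternating alternating_prod_ne_one unfolding word_prod_def by blast

lemma alternates_inv_left: "x \<in> carrier G \<Longrightarrow> alternates (inv x) y \<longleftrightarrow> alternates x y"
  using subgroup_inv_mem_iff[OF subgroup_A] by (simp add: alternates_def)

lemma reduced_rev_inv:
  assumes "reduced xs"
  shows "reduced (rev (map (\<lambda>x. inv x) xs))"
proof -
  have letters: "set xs \<subseteq> (A \<union> B) - C" and alt: "successively alternates xs"
    using assms unfolding reduced_def by auto
  have "set (rev (map (\<lambda>x. inv x) xs)) \<subseteq> (A \<union> B) - C"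
    using letters subgroup_inv_mem_iff[OF subgroup_A] subgroup_inv_mem_iff[OF subgroup_B]
      subgroup_inv_mem_iff[OF subgroup_C] A_B_carrier by auto
  moreover have "successively alternates (rev (map (\<lambda>x. inv x) xs))"
    unfolding successively_rev successively_map
  proof (rule successively_mono[OF alt])
    fix x y assume "x \<in> set xs" "y \<in> set xs" "alternates x y"
    then show "alternates (inv y) (inv x)"
      using letters A_B_carrier subgroup_inv_mem_iff[OF subgroup_A] by (auto simp: alternates_def)
  qed
  ultimately show ?thesis unfolding reduced_def by blast
qed

lemma reduced_Cons_replace:
  assumes "reduced (x # xs)" "u \<in> factor_of x - C"
  shows "reduced (u # xs)"
proof -
  have x: "x \<in> (A \<union> B) - C" using assms(1) reduced_Cons by blast
  have u: "u \<in> (A \<union> B) - C" using assms(2) factor_of_subset by blast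
  have "\<not> alternates u x" using alternates_iff_not_mem_factor_of[OF u] assms(2) by blast
  then have "alternates u y \<longleftrightarrow> alternates x y" for y by (auto simp: alternates_def)
  then show ?thesis using assms(1) u reduced_Cons by auto
qed

definition has_reduced_length :: "'a \<Rightarrow> nat \<Rightarrow> bool" where
  "has_reduced_length g r \<longleftrightarrow>
     (r = 0 \<and> g \<in> C) \<or> (\<exists>xs. reduced xs \<and> xs \<noteq> [] \<and> length xs = r \<and> g = word_prod xs)"

lemma has_reduced_length_word_prod:
  "reduced xs \<Longrightarrow> xs \<noteq> [] \<Longrightarrow> has_reduced_length (word_prod xs) (length xs)"
  unfolding has_reduced_length_def by blast

lemma has_reduced_length_carrier: "has_reduced_length g r \<Longrightarrow> g \<in> carrier G"
  unfolding has_reduced_length_def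
  using subgroup.subset[OF subgroup_C] word_prod_closed reduced_carrier by blast

lemma has_reduced_length_letter_mult_word:
  assumes xs: "reduced (x # xs)" and y: "y \<in> A \<union> B"
  shows "\<exists>r. has_reduced_length (y \<otimes> word_prod (x # xs)) r \<and> length xs \<le> r \<and> r \<le> length xs + 2"
proof -
  have x: "x \<in> (A \<union> B) - C" and xs': "reduced xs" using xs reduced_Cons by auto
  have carrier: "x \<in> carrier G" "y \<in> carrier G" "word_prod xs \<in> carrier G"
    using x y A_B_carrier word_prod_closed reduced_carrier[OF xs'] by auto
  have prod: "y \<otimes> word_prod (x # xs) = (y \<otimes> x) \<otimes> word_prod xs" using carrier by (simp add: m_assoc)
  show ?thesis
  proof (cases "y \<in> factor_of x")
    case False
    then have "y \<in> (A \<union> B) - C" using y C_subset_factor_of by blast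
    then have "reduced (y # x # xs)"
      using xs False alternates_iff_not_mem_factor_of reduced_Cons by auto
    then show ?thesis using has_reduced_length_word_prod[of "y # x # xs"] by fastforce
  next
    case True
    then have yx: "y \<otimes> x \<in> factor_of x"
      using x mem_factor_of subgroup.m_closed[OF subgroup_factor_of] by blast
    show ?thesis
    proof (cases "y \<otimes> x \<in> C")
      case False
      then have "reduced ((y \<otimes> x) # xs)" using reduced_Cons_replace[OF xs] yx by blast
      then show ?thesis using has_reduced_length_word_prod[of "(y \<otimes> x) # xs"] prod by fastforce
    next
      case yx_C: True
      show ?thesis
      proof (cases xs)
        case Nil
        then show ?thesis using yx_C carrier prod unfolding has_reduced_length_def by auto
      next
        case (Cons x2 xs2)
        have x2: "x2 \<in> (A \<union> B) - C" using xs' Cons reduced_Cons by auto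
        then have x2_carrier: "x2 \<in> carrier G" using A_B_carrier by blast
        have "(y \<otimes> x) \<otimes> x2 \<notin> C"
          using subgroup_mult_mem_iff_left[OF subgroup_C yx_C x2_carrier] x2 by blast
        moreover have "(y \<otimes> x) \<otimes> x2 \<in> factor_of x2"
          using yx_C x2 C_subset_factor_of mem_factor_of subgroup.m_closed[OF subgroup_factor_of]
          by blast
        ultimately have "reduced (((y \<otimes> x) \<otimes> x2) # xs2)"
          using reduced_Cons_replace xs' Cons by blast
        moreover have "y \<otimes> word_prod (x # xs) = word_prod (((y \<otimes> x) \<otimes> x2) # xs2)"
          using prod Cons carrier x2_carrier reduced_carrier[OF xs']
          by (simp add: m_assoc word_prod_closed)
        ultimately show ?thesis using has_reduced_length_word_prod Cons by fastforce
      qed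
    qed
  qed
qed

lemma has_reduced_length_letter_mult:
  assumes g: "has_reduced_length g r" and y: "y \<in> A \<union> B"
  shows "\<exists>r'. has_reduced_length (y \<otimes> g) r' \<and> r \<le> r' + 1 \<and> r' \<le> r + 1"
proof -
  from g consider (in_C) "r = 0" "g \<in> C"
    | (word) xs where "reduced xs" "xs \<noteq> []" "length xs = r" "g = word_prod xs"
    unfolding has_reduced_length_def by blast
  then show ?thesis
  proof cases
    case in_C
    then have yg: "y \<otimes> g \<in> factor_of y"
      using y mem_factor_of C_subset_factor_of subgroup.m_closed[OF subgroup_factor_of] by blast
    show ?thesis
    proof (cases "y \<otimes> g \<in> C")
      case False
      then have "reduced [y \<otimes> g]" using yg factor_of_subset by (auto simp: reduced_Cons)
      then show ?thesis
        using has_reduced_length_word_prod[of "[y \<otimes> g]"] y in_C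
          A_B_carrier subgroup.mem_carrier[OF subgroup_C] by fastforce
    next
      case True
      then show ?thesis using in_C by (intro exI[of _ 0]) (simp add: has_reduced_length_def)
    qed
  next
    case word
    then show ?thesis
      using has_reduced_length_letter_mult_word[OF _ y] by (cases xs) fastforce+
  qed
qed

lemma has_reduced_length_word_mult:
  assumes g: "has_reduced_length g r" and ys: "set ys \<subseteq> A \<union> B"
  shows "\<exists>r'. has_reduced_length (word_prod ys \<otimes> g) r' \<and> r \<le> r' + length ys"
  using ys
proof (induction ys)
  case Nil
  then show ?case using g has_reduced_length_carrier by auto
next
  case (Cons y ys)
  then obtain r' where r': "has_reduced_length (word_prod ys \<otimes> g) r'" "r \<le> r' + length ys"
    by auto
  obtain r'' where r'': "has_reduced_length (y \<otimes> (word_prod ys \<otimes> g)) r''" "r' \<le> r'' + 1"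
    using has_reduced_length_letter_mult[OF r'(1)] Cons.prems by auto
  have "word_prod (y # ys) \<otimes> g = y \<otimes> (word_prod ys \<otimes> g)"
    using Cons.prems A_B_carrier word_prod_closed has_reduced_length_carrier[OF g]
    by (simp add: m_assoc subset_iff)
  then show ?case using r' r'' by auto
qed

lemma word_prod_of_generate: "g \<in> generate G (A \<union> B) \<Longrightarrow> \<exists>ys. set ys \<subseteq> A \<union> B \<and> g = word_prod ys"
proof (induction rule: generate.induct)
  case one
  show ?case by (intro exI[of _ "[]"]) simp
next
  case (incl h)
  then show ?case using A_B_carrier by (intro exI[of _ "[h]"]) auto
next
  case (inv h)
  then have "inv h \<in> A \<union> B"
    using subgroup.m_inv_closed[OF subgroup_A] subgroup.m_inv_closed[OF subgroup_B] by blast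
  then show ?case using A_B_carrier by (intro exI[of _ "[inv h]"]) auto
next
  case (eng h1 h2)
  then obtain ys1 ys2 where ys: "set ys1 \<subseteq> A \<union> B" "h1 = word_prod ys1"
    "set ys2 \<subseteq> A \<union> B" "h2 = word_prod ys2"
    by blast
  moreover have "set ys1 \<subseteq> carrier G" "set ys2 \<subseteq> carrier G"
    using ys(1,3) A_carrier B_carrier by blast+
  ultimately show ?case using word_prod_append by (intro exI[of _ "ys1 @ ys2"]) auto
qed

lemma has_reduced_length_exists: "g \<in> carrier G \<Longrightarrow> \<exists>r. has_reduced_length g r"
proof -
  assume "g \<in> carrier G"
  then obtain ys where ys: "set ys \<subseteq> A \<union> B" "g = word_prod ys"
    using word_prod_of_generate generate_A_B by blast
  have "has_reduced_length \<one> 0"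
    using subgroup.one_closed[OF subgroup_C] by (simp add: has_reduced_length_def)
  then show ?thesis
    using has_reduced_length_word_mult[OF _ ys(1)] ys A_B_carrier word_prod_closed
    by (metis r_one subset_iff)
qed

lemma has_reduced_length_one: "has_reduced_length \<one> r \<Longrightarrow> r = 0"
  unfolding has_reduced_length_def using word_prod_reduced_ne_one by metis

lemma has_reduced_length_inv: "has_reduced_length g r \<Longrightarrow> has_reduced_length (inv g) r"
  unfolding has_reduced_length_def
proof (elim disjE exE conjE)
  fix xs assume xs: "reduced xs" "xs \<noteq> []" "length xs = r" "g = word_prod xs"
  then have "inv g = word_prod (rev (map (\<lambda>x. inv x) xs))"
    using inv_word_prod reduced_carrier by blast
  then show "(r = 0 \<and> inv g \<in> C) \<or>
    (\<exists>xs. reduced xs \<and> xs \<noteq> [] \<and> length xs = r \<and> inv g = word_prod xs)"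
    using xs reduced_rev_inv by (intro disjI2 exI[of _ "rev (map (\<lambda>x. inv x) xs)"]) auto
qed (use subgroup.m_inv_closed[OF subgroup_C] in blast)

(*
  A word of length at most max r' 1 for g^-1 multiplies g down to 1, which has reduced length 0
  by the normal form theorem; hence r \<le> max r' 1.
*)
lemma has_reduced_length_unique:
  assumes "has_reduced_length g r" "has_reduced_length g r'"
  shows "r = r'"
proof -
  have False if g: "has_reduced_length g r" "has_reduced_length g r'" and lt: "r' < r" for r r'
  proof -
    have g_carrier: "g \<in> carrier G" using has_reduced_length_carrier[OF g(1)] .
    obtain ys where ys: "set ys \<subseteq> A \<union> B" "word_prod ys = inv g" "length ys \<le> max r' 1"
    proof (cases "r' = 0")
      case True
      then have "inv g \<in> C"
        using g(2) subgroup.m_inv_closed[OF subgroup_C] word_prod_reduced_ne_one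
        unfolding has_reduced_length_def by auto
      then show ?thesis using that[of "[inv g]"] C_subset_A g_carrier by auto
    next
      case False
      then obtain xs where "reduced xs" "length xs = r'" "inv g = word_prod xs"
        using has_reduced_length_inv[OF g(2)] unfolding has_reduced_length_def by blast
      then show ?thesis using that[of xs] unfolding reduced_def by auto
    qed
    obtain r'' where r'': "has_reduced_length (word_prod ys \<otimes> g) r''" "r \<le> r'' + length ys"
      using has_reduced_length_word_mult[OF g(1) ys(1)] by blast
    have "r'' = 0" using r''(1) ys(2) g_carrier has_reduced_length_one by simp
    then have "r \<le> max r' 1" using r''(2) ys(3) by simp
    then have "r' = 0" "r = 1" using lt by auto
    then have "g \<in> C" and "g \<notin> C"
      using g A_carrier B_carrier unfolding has_reduced_length_def reduced_def
      by (auto simp: length_Suc_conv subset_iff)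
    then show False by blast
  qed
  then show ?thesis using assms by (metis linorder_neqE_nat)
qed

definition reduced_length :: "'a \<Rightarrow> nat" where
  "reduced_length g = (THE r. has_reduced_length g r)"

lemma reduced_length_eq: "has_reduced_length g r \<Longrightarrow> reduced_length g = r"
  unfolding reduced_length_def using has_reduced_length_unique by blast

lemma has_reduced_length_reduced_length: "g \<in> carrier G \<Longrightarrow> has_reduced_length g (reduced_length g)"
  using has_reduced_length_exists reduced_length_eq by metis

lemma reduced_length_word_prod: "reduced xs \<Longrightarrow> reduced_length (word_prod xs) = length xs"
  using reduced_length_eq has_reduced_length_word_prod subgroup.one_closed[OF subgroup_C]
  by (cases "xs = []") (auto simp: has_reduced_length_def)

lemma reduced_length_word_prod_append:
  "reduced (xs @ ys) \<Longrightarrow> reduced_length (word_prod xs \<otimes> word_prod ys) = length xs + length ys"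
  using reduced_length_word_prod word_prod_append reduced_carrier by fastforce

lemma reduced_length_eq_0_iff: "g \<in> carrier G \<Longrightarrow> reduced_length g = 0 \<longleftrightarrow> g \<in> C"
  using has_reduced_length_reduced_length reduced_length_eq
  unfolding has_reduced_length_def by fastforce

lemma reduced_length_cases:
  assumes "g \<in> carrier G"
  obtains (in_C) "g \<in> C" "reduced_length g = 0"
    | (word) x xs where "reduced (x # xs)" "reduced_length g = length (x # xs)"
      "g = word_prod (x # xs)"
  using has_reduced_length_reduced_length[OF assms] unfolding has_reduced_length_def
  by (metis neq_Nil_conv)

lemma reduced_word_exists:
  assumes "g \<in> carrier G" "reduced_length g \<noteq> 0"
  obtains xs where "reduced xs" "length xs = reduced_length g" "g = word_prod xs"
  using has_reduced_length_reduced_length[OF assms(1)] assms(2)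
  unfolding has_reduced_length_def by blast

lemma reduced_length_inv: "g \<in> carrier G \<Longrightarrow> reduced_length (inv g) = reduced_length g"
  using has_reduced_length_reduced_length has_reduced_length_inv reduced_length_eq by metis

lemma reduced_length_letter_mult_le:
  "g \<in> carrier G \<Longrightarrow> y \<in> A \<union> B \<Longrightarrow> reduced_length (y \<otimes> g) \<le> reduced_length g + 1"
  using has_reduced_length_letter_mult[OF has_reduced_length_reduced_length] reduced_length_eq
  by metis

lemma reduced_length_C_mult:
  assumes c: "c \<in> C" and g: "g \<in> carrier G"
  shows "reduced_length (c \<otimes> g) = reduced_length g"
proof -
  have c_carrier: "c \<in> carrier G" using c subgroup.mem_carrier[OF subgroup_C] by blast
  show ?thesis
  proof (cases rule: reduced_length_cases[OF g, case_names in_C word])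
    case in_C
    then have "c \<otimes> g \<in> C" using c subgroup.m_closed[OF subgroup_C] by blast
    then show ?thesis using in_C reduced_length_eq_0_iff[of "c \<otimes> g"] g c_carrier by simp
  next
    case (word x xs)
    have x: "x \<in> (A \<union> B) - C" "reduced xs" using word(1) reduced_Cons by auto
    then have "c \<otimes> x \<in> factor_of x - C"
      using c C_subset_factor_of mem_factor_of subgroup.m_closed[OF subgroup_factor_of]
        subgroup_mult_mem_iff_left[OF subgroup_C c] A_B_carrier by blast
    then have "reduced ((c \<otimes> x) # xs)" using reduced_Cons_replace[OF word(1)] by blast
    moreover have "c \<otimes> g = word_prod ((c \<otimes> x) # xs)"
      using word(3) c_carrier x A_B_carrier word_prod_closed reduced_carrier
      by (simp add: m_assoc)
    ultimately have "reduced_length (c \<otimes> g) = length ((c \<otimes> x) # xs)"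
      using reduced_length_word_prod by metis
    then show ?thesis using word(2) by simp
  qed
qed

section \<open>Finite subgroups of amalgamated free products\<close>

lemma reduced_inverse_word:
  assumes "reduced (x # xs)"
  obtains ws where "reduced ws" "length ws = length (x # xs)" "last ws = inv x"
    "inv (word_prod (x # xs)) = word_prod ws"
proof
  let ?ws = "rev (map (\<lambda>x. inv x) (x # xs))"
  show "reduced ?ws" by (rule reduced_rev_inv[OF assms])
  show "inv (word_prod (x # xs)) = word_prod ?ws"
    by (rule inv_word_prod[OF reduced_carrier[OF assms]])
qed simp_all

(*
  Depending on whether the first letter of u alternates with the last letter of cs, one of the
  two products is a reduced word of length |u| + R.
*)
lemma reduced_length_midpoint_even:
  assumes xs: "reduced (cs @ ds)" "length cs = R" "length ds = R" and u: "u \<in> carrier G"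
  shows "reduced_length u + R \<le>
    max (reduced_length (word_prod cs \<otimes> u)) (reduced_length (inv u \<otimes> word_prod ds))"
proof (cases "R = 0")
  case True
  then show ?thesis using xs u by simp
next
  case False
  then have "cs \<noteq> []" "ds \<noteq> []" using xs by auto
  then have cs: "reduced cs" and ds: "reduced ds" and join: "alternates (last cs) (hd ds)"
    using xs(1) reduced_append by auto
  show ?thesis
  proof (cases rule: reduced_length_cases[OF u, case_names in_C word])
    case in_C
    have "reduced_length (inv u \<otimes> word_prod ds) = R"
      using reduced_length_C_mult subgroup.m_inv_closed[OF subgroup_C in_C(1)]
        word_prod_closed[OF reduced_carrier[OF ds]] reduced_length_word_prod[OF ds] xs(3) by simp
    then show ?thesis using in_C by simp
  next
    case (word v vs)
    show ?thesis
    proof (cases "alternates (last cs) v")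
      case True
      then have red: "reduced (cs @ v # vs)" using cs word(1) reduced_append by simp
      show ?thesis using reduced_length_word_prod_append[OF red] word(2,3) xs(2) by simp
    next
      case False
      obtain ws where ws: "reduced ws" "length ws = length (v # vs)" "last ws = inv v"
        "inv u = word_prod ws"
        using reduced_inverse_word[OF word(1)] word(3) by blast
      have v_carrier: "v \<in> carrier G" using reduced_carrier[OF word(1)] by simp
      have "alternates (inv v) (hd ds)"
        using False join alternates_inv_left[OF v_carrier] by (auto simp: alternates_def)
      then have red: "reduced (ws @ ds)" using ws(1,3) ds \<open>ds \<noteq> []\<close> reduced_append by auto
      show ?thesis using reduced_length_word_prod_append[OF red] ws(2,4) word(2) xs(3) by simp
    qed
  qed
qed

lemma reduced_length_midpoint_odd:
  assumes xs: "reduced (cs @ x # ds)" "length cs = R" "length ds = R" and u: "u \<in> carrier G"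
  shows "\<exists>y\<in>factor_of x. reduced_length (y \<otimes> u) + R + 1 \<le>
    max (reduced_length (word_prod cs \<otimes> u)) (reduced_length (inv u \<otimes> word_prod (x # ds)))"
proof -
  have cs: "reduced cs" and xds: "reduced (x # ds)" and join: "cs = [] \<or> alternates (last cs) x"
    using xs(1) reduced_append by auto
  have x: "x \<in> (A \<union> B) - C" using xds reduced_Cons by blast
  show ?thesis
  proof (cases rule: reduced_length_cases[OF u, case_names in_C word])
    case in_C
    have inv_u: "inv u \<in> C" using subgroup.m_inv_closed[OF subgroup_C in_C(1)] .
    have "reduced_length (inv u \<otimes> word_prod (x # ds)) = R + 1"
      using reduced_length_C_mult[OF inv_u] word_prod_closed[OF reduced_carrier[OF xds]]
        reduced_length_word_prod[OF xds] xs(3) by simp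
    moreover have "reduced_length (inv u \<otimes> u) = 0"
      using u reduced_length_eq_0_iff subgroup.one_closed[OF subgroup_C] by simp
    ultimately show ?thesis using inv_u C_subset_factor_of by (intro bexI[of _ "inv u"]) auto
  next
    case (word v vs)
    have v: "v \<in> (A \<union> B) - C" "reduced vs" using word(1) reduced_Cons by auto
    then have v_carrier: "v \<in> carrier G" using A_B_carrier by blast
    show ?thesis
    proof (cases "v \<in> factor_of x")
      case True
      have "alternates y v \<longleftrightarrow> alternates y x" for y
        using True alternates_iff_not_mem_factor_of[OF v(1)] by (auto simp: alternates_def)
      then have red: "reduced (cs @ v # vs)" using cs word(1) join reduced_append by auto
      have "reduced_length (word_prod cs \<otimes> u) = R + length (v # vs)"
        using reduced_length_word_prod_append[OF red] word(3) xs(2) by simp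
      moreover have "reduced_length (inv v \<otimes> u) = length vs"
        using word(3) v_carrier word_prod_closed[OF reduced_carrier[OF v(2)]]
          reduced_length_word_prod[OF v(2)] by simp
      moreover have "inv v \<in> factor_of x"
        using True subgroup.m_inv_closed[OF subgroup_factor_of] by blast
      ultimately show ?thesis by (intro bexI[of _ "inv v"]) auto
    next
      case False
      obtain ws where ws: "reduced ws" "length ws = length (v # vs)" "last ws = inv v"
        "inv u = word_prod ws"
        using reduced_inverse_word[OF word(1)] word(3) by blast
      have "alternates (inv v) x"
        using False alternates_iff_not_mem_factor_of[OF v(1)] alternates_inv_left[OF v_carrier]
        by blast
      then have red: "reduced (ws @ x # ds)" using ws(1,3) xds reduced_append by auto
      have "reduced_length (inv u \<otimes> word_prod (x # ds)) = reduced_length u + R + 1"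
        using reduced_length_word_prod_append[OF red] ws(2,4) word(2) xs(3) by simp
      then show ?thesis
        using u subgroup.one_closed[OF subgroup_factor_of] by (intro bexI[of _ \<one>]) auto
    qed
  qed
qed

(* For z = h c both lengths on the right are at most E, so x c^-1 h c has reduced length 0. *)
lemma conj_into_of_midpoint:
  assumes H: "subgroup H G" "k \<in> H" and S: "subgroup S G" "C \<subseteq> S" and c: "c \<in> carrier G"
    and bound: "\<And>h. h \<in> H \<Longrightarrow> reduced_length (inv c \<otimes> h) \<le> E"
    and midpoint: "\<And>z. z \<in> carrier G \<Longrightarrow> \<exists>x\<in>S.
      reduced_length (x \<otimes> (inv c \<otimes> z)) + E \<le> max (reduced_length z) (reduced_length (inv z \<otimes> k))"
  shows "conj_by G (inv c) ` H \<subseteq> S"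
proof
  fix w assume "w \<in> conj_by G (inv c) ` H"
  then obtain h where h: "h \<in> H" "w = conj_by G (inv c) h" by blast
  have carrier: "h \<in> carrier G" "k \<in> carrier G"
    using subgroup.mem_carrier[OF H(1) h(1)] subgroup.mem_carrier[OF H] by simp_all
  define z where "z = h \<otimes> c"
  have z: "z \<in> carrier G" using carrier c by (simp add: z_def)
  have "reduced_length z = reduced_length (inv c \<otimes> inv h)"
    using reduced_length_inv[OF z] carrier c by (simp add: z_def inv_mult_group)
  also have "\<dots> \<le> E" using bound subgroup.m_inv_closed[OF H(1) h(1)] by blast
  finally have z_le: "reduced_length z \<le> E" .
  have "inv z \<otimes> k = inv c \<otimes> (inv h \<otimes> k)" using carrier c by (simp add: z_def inv_mult_group m_assoc)
  then have k_le: "reduced_length (inv z \<otimes> k) \<le> E"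
    using bound subgroup.m_closed[OF H(1) subgroup.m_inv_closed[OF H(1) h(1)] H(2)] by simp
  obtain x where x: "x \<in> S"
    "reduced_length (x \<otimes> (inv c \<otimes> z)) + E \<le> max (reduced_length z) (reduced_length (inv z \<otimes> k))"
    using midpoint[OF z] by blast
  have w_eq: "inv c \<otimes> z = w" using h(2) carrier c by (simp add: z_def conj_by_def m_assoc)
  have w_carrier: "w \<in> carrier G" using h(2) carrier c by simp
  have x_carrier: "x \<in> carrier G" using subgroup.mem_carrier[OF S(1) x(1)] .
  have "reduced_length (x \<otimes> w) = 0" using x(2) z_le k_le w_eq by simp
  then have "x \<otimes> w \<in> S" using reduced_length_eq_0_iff x_carrier w_carrier S(2) by auto
  then show "w \<in> S" using subgroup_mult_mem_iff_left[OF S(1) x(1) w_carrier] by blast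
qed

lemma conj_into_C_if_even_max:
  assumes H: "subgroup H G" "word_prod (cs @ ds) \<in> H"
    and xs: "reduced (cs @ ds)" "length cs = R" "length ds = R"
    and max: "\<And>h. h \<in> H \<Longrightarrow> reduced_length h \<le> 2 * R"
  shows "conj_by G (inv (word_prod cs)) ` H \<subseteq> C"
proof -
  let ?c = "word_prod cs" and ?k = "word_prod (cs @ ds)"
  have carrier: "set cs \<subseteq> carrier G" "set ds \<subseteq> carrier G"
    using reduced_carrier[OF xs(1)] by auto
  have c: "?c \<in> carrier G" using word_prod_closed[OF carrier(1)] .
  have midpoint:
    "reduced_length (inv ?c \<otimes> z) + R \<le> max (reduced_length z) (reduced_length (inv z \<otimes> ?k))"
    if z: "z \<in> carrier G" for z
  proof -
    have "?c \<otimes> (inv ?c \<otimes> z) = z" "inv (inv ?c \<otimes> z) \<otimes> word_prod ds = inv z \<otimes> ?k"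
      using c z word_prod_closed[OF carrier(2)]
      by (simp_all add: inv_mult_group m_assoc word_prod_append[OF carrier])
    then show ?thesis using reduced_length_midpoint_even[OF xs] c z by (metis inv_closed m_closed)
  qed
  show ?thesis
  proof (rule conj_into_of_midpoint[OF H subgroup_C subset_refl c])
    fix h assume "h \<in> H"
    then have "reduced_length h \<le> 2 * R" "reduced_length (inv h \<otimes> ?k) \<le> 2 * R"
      using max subgroup.m_closed[OF H(1) subgroup.m_inv_closed[OF H(1)] H(2)] by auto
    then show "reduced_length (inv ?c \<otimes> h) \<le> R"
      using midpoint[OF subgroup.mem_carrier[OF H(1) \<open>h \<in> H\<close>]] by simp
  next
    fix z assume "z \<in> carrier G"
    then show "\<exists>x\<in>C. reduced_length (x \<otimes> (inv ?c \<otimes> z)) + R \<le>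
        max (reduced_length z) (reduced_length (inv z \<otimes> ?k))"
      using midpoint c subgroup.one_closed[OF subgroup_C] by (intro bexI[of _ \<one>]) auto
  qed
qed

lemma conj_into_factor_if_odd_max:
  assumes H: "subgroup H G" "word_prod (cs @ x # ds) \<in> H"
    and xs: "reduced (cs @ x # ds)" "length cs = R" "length ds = R"
    and max: "\<And>h. h \<in> H \<Longrightarrow> reduced_length h \<le> 2 * R + 1"
  shows "conj_by G (inv (word_prod cs)) ` H \<subseteq> factor_of x"
proof -
  let ?c = "word_prod cs" and ?k = "word_prod (cs @ x # ds)"
  have carrier: "set cs \<subseteq> carrier G" "set (x # ds) \<subseteq> carrier G"
    using reduced_carrier[OF xs(1)] by auto
  have c: "?c \<in> carrier G" using word_prod_closed[OF carrier(1)] .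
  have midpoint: "\<exists>y\<in>factor_of x. reduced_length (y \<otimes> (inv ?c \<otimes> z)) + (R + 1) \<le>
      max (reduced_length z) (reduced_length (inv z \<otimes> ?k))"
    if z: "z \<in> carrier G" for z
  proof -
    have "?c \<otimes> (inv ?c \<otimes> z) = z" "inv (inv ?c \<otimes> z) \<otimes> word_prod (x # ds) = inv z \<otimes> ?k"
      using c z word_prod_closed[OF carrier(2)]
      by (simp_all add: inv_mult_group m_assoc word_prod_append[OF carrier] del: word_prod_Cons)
    then show ?thesis
      using reduced_length_midpoint_odd[OF xs, of "inv ?c \<otimes> z"] c z by (simp add: add.assoc)
  qed
  show ?thesis
  proof (rule conj_into_of_midpoint[OF H subgroup_factor_of C_subset_factor_of c])
    fix h assume h: "h \<in> H"
    then have h_carrier: "h \<in> carrier G" using subgroup.mem_carrier[OF H(1)] by blast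
    have "reduced_length h \<le> 2 * R + 1" "reduced_length (inv h \<otimes> ?k) \<le> 2 * R + 1"
      using h max subgroup.m_closed[OF H(1) subgroup.m_inv_closed[OF H(1)] H(2)] by auto
    then obtain y where y: "y \<in> factor_of x" "reduced_length (y \<otimes> (inv ?c \<otimes> h)) \<le> R"
      using midpoint[OF h_carrier] by fastforce
    have y_carrier: "y \<in> carrier G" using subgroup.mem_carrier[OF subgroup_factor_of y(1)] .
    have "inv y \<in> A \<union> B"
      using subgroup.m_inv_closed[OF subgroup_factor_of y(1)] factor_of_subset by blast
    then have "reduced_length (inv y \<otimes> (y \<otimes> (inv ?c \<otimes> h))) \<le> R + 1"
      using reduced_length_letter_mult_le[of "y \<otimes> (inv ?c \<otimes> h)"] y(2) y_carrier c h_carrier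
      by fastforce
    then show "reduced_length (inv ?c \<otimes> h) \<le> R + 1" using y_carrier c h_carrier by simp
  qed (use midpoint in blast)
qed

theorem finite_subgroup_conj_into_factor:
  assumes H: "subgroup H G" "finite H"
  shows "\<exists>g\<in>carrier G. conj_by G g ` H \<subseteq> A \<or> conj_by G g ` H \<subseteq> B"
proof -
  define D where "D = Max (reduced_length ` H)"
  have max: "reduced_length h \<le> D" if "h \<in> H" for h
    using that H(2) by (simp add: D_def)
  obtain xs where xs: "word_prod xs \<in> H" "reduced xs" "length xs = D"
  proof (cases "D = 0")
    case True
    then show ?thesis using that[of "[]"] subgroup.one_closed[OF H(1)] by simp
  next
    case False
    have "D \<in> reduced_length ` H"
      unfolding D_def using H(2) subgroup.one_closed[OF H(1)] by (intro Max_in) auto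
    then obtain k where "k \<in> H" "reduced_length k = D" by blast
    then show ?thesis
      using that reduced_word_exists[of k] False subgroup.mem_carrier[OF H(1)] by metis
  qed
  obtain R where "D = 2 * R \<or> D = 2 * R + 1" by (metis evenE oddE)
  define cs where "cs = take R xs"
  have c: "inv (word_prod cs) \<in> carrier G"
    using reduced_carrier[OF xs(2)] word_prod_closed set_take_subset
    by (metis cs_def inv_closed subset_trans)
  from \<open>D = 2 * R \<or> D = 2 * R + 1\<close> show ?thesis
  proof
    assume D: "D = 2 * R"
    define ds where "ds = drop R xs"
    have split: "xs = cs @ ds" "length cs = R" "length ds = R"
      using xs(3) D by (simp_all add: cs_def ds_def)
    have "conj_by G (inv (word_prod cs)) ` H \<subseteq> C"
      by (rule conj_into_C_if_even_max[OF H(1)]) (use xs split max D in auto)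
    then show ?thesis using c C_subset_A by blast
  next
    assume D: "D = 2 * R + 1"
    define x ds where "x = xs ! R" and "ds = drop (Suc R) xs"
    have split: "xs = cs @ x # ds" "length cs = R" "length ds = R"
      using xs(3) D id_take_nth_drop[of R xs] by (simp_all add: cs_def x_def ds_def)
    have "conj_by G (inv (word_prod cs)) ` H \<subseteq> factor_of x"
      by (rule conj_into_factor_if_odd_max[OF H(1)]) (use xs split max D in auto)
    then show ?thesis using c unfolding factor_of_def by (auto split: if_splits)
  qed
qed

lemma prime_power_subgroup_conj_into_normal_factor:
  assumes SA: "semidirect_decomposition G N T" "A = N <#> T" "finite T" "coprime r (card T)"
    and SB: "semidirect_decomposition G N' T'" "B = N' <#> T'" "T' \<subseteq> N" "\<not> r dvd card N'"
    and H: "subgroup H G" "card H = r ^ k" and r: "Factorial_Ring.prime r"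
  shows "\<exists>g\<in>carrier G. conj_by G g ` H \<subseteq> N"
proof -
  have "finite H"
    using H(2) prime_gt_0_nat[OF r] by (metis card.infinite nat_less_le power_not_zero)
  then obtain g where g: "g \<in> carrier G" and into: "conj_by G g ` H \<subseteq> A \<or> conj_by G g ` H \<subseteq> B"
    using finite_subgroup_conj_into_factor[OF H(1)] by blast
  let ?K = "conj_by G g ` H"
  have K: "subgroup ?K G" "finite ?K" "card ?K = r ^ k"
    using subgroup_conj_by_image[OF H(1) g] \<open>finite H\<close>
      card_conj_by_image[OF subgroup.subset[OF H(1)] g] H(2)
    by auto
  show ?thesis
  proof (cases "?K \<subseteq> A")
    case True
    have "coprime (card ?K) (card T)" using K(3) SA(4) by (simp add: coprime_power_left_iff)
    then have "?K \<subseteq> N"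
      using semidirect_decomposition.subset_N_if_coprime[OF SA(1) K(1,2)] True SA(2,3) by blast
    then show ?thesis using g by blast
  next
    case False
    then have "?K \<subseteq> B" using into by blast
    moreover have "\<not> r dvd card ((\<lambda>m. m <#\<^bsub>G\<^esub> T') ` B)"
      using semidirect_decomposition.card_lcosets_eq_card_N[OF SB(1)] SB(2,4) by simp
    ultimately obtain y where y: "y \<in> B" "conj_by G (inv y) ` ?K \<subseteq> T'"
      using prime_power_subgroup_conj_into_subgroup[OF subgroup_B
          semidirect_decomposition.subgroup_T[OF SB(1)] K(1) _ K(3) r]
      by blast
    have "inv y \<otimes> g \<in> carrier G" using y(1) B_carrier g by blast
    moreover have "conj_by G (inv y \<otimes> g) ` H \<subseteq> N"
      using y B_carrier g subgroup.subset[OF H(1)] SB(3) by (subst conj_by_image_mult) auto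
    ultimately show ?thesis by blast
  qed
qed

end

lemma prime_not_dvd_prime_power:
  fixes p q :: nat
  assumes "Factorial_Ring.prime p" "Factorial_Ring.prime q" "p \<noteq> q"
  shows "\<not> q dvd p ^ k"
  using assms prime_dvd_power primes_dvd_imp_eq by metis

theorem mainTheorem7:
  fixes Xg :: "'a monoid" (structure) and p q m n :: nat
    and Q P A B C :: "'a set" and \<alpha> \<beta> :: 'a
  assumes "Factorial_Ring.prime p" and "Factorial_Ring.prime q" and "odd p" and "odd q" and "p \<noteq> q"
    and "m = (LEAST k. 0 < k \<and> p dvd Sp_order k (int q))"
    and "n = (LEAST k. 0 < k \<and> q dvd Sp_order k (int p))"
    and "extraspecial Xg q Q" and "card Q = q ^ (2*m+1)" and "has_exponent Xg Q q"
    and "extraspecial Xg p P" and "card P = p ^ (2*n+1)" and "has_exponent Xg P p"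
    and "good_action Xg Q \<alpha> p" and "good_action Xg P \<beta> q"
    and "A = Q <#>\<^bsub>Xg\<^esub> generate Xg {\<alpha>}"
    and "B = P <#>\<^bsub>Xg\<^esub> generate Xg {\<beta>}"
    and "generate Xg {\<alpha>} = sub_center Xg P"
    and "sub_center Xg Q = generate Xg {\<beta>}"
    and "C = sub_center Xg Q <#>\<^bsub>Xg\<^esub> generate Xg {\<alpha>}"
    and "C = sub_center Xg P <#>\<^bsub>Xg\<^esub> generate Xg {\<beta>}"
    and "is_amalgamated_product Xg A B C"
  shows "(\<forall>H. subgroup H Xg \<and> finite H \<and> (\<exists>k. card H = q ^ k) \<longrightarrow>
            (\<exists>g\<in>carrier Xg. conj_by Xg g ` H \<subseteq> Q))
       \<and> (\<forall>H. subgroup H Xg \<and> finite H \<and> (\<exists>k. card H = p ^ k) \<longrightarrow>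
            (\<exists>g\<in>carrier Xg. conj_by Xg g ` H \<subseteq> P))"
proof -
  have AB: "amalgamated_product Xg A B C" "amalgamated_product Xg B A C"
    using amalgamated_productI[OF assms(22)] amalgamated_product_swap by blast+
  interpret amalgamated_product Xg A B C by (rule AB(1))
  have Q: "subgroup Q Xg" and P: "subgroup P Xg"
    using assms(8,11) unfolding extraspecial_def by auto
  have SQ: "semidirect_decomposition Xg Q (generate Xg {\<alpha>})"
    by (rule semidirect_decomposition_good_action[OF is_group Q assms(14)]) (rule prime_gt_0_nat[OF assms(1)])
  have SP: "semidirect_decomposition Xg P (generate Xg {\<beta>})"
    by (rule semidirect_decomposition_good_action[OF is_group P assms(15)]) (rule prime_gt_0_nat[OF assms(2)])
  have cards: "card (generate Xg {\<alpha>}) = p" "card (generate Xg {\<beta>}) = q"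
    using assms(14,15) generate_pow_card unfolding good_action_def by auto
  have "coprime q p" "coprime p q"
    using primes_coprime[OF assms(2,1)] primes_coprime[OF assms(1,2)] assms(5) by auto
  then have T: "finite (generate Xg {\<alpha>})" "coprime q (card (generate Xg {\<alpha>}))"
    "finite (generate Xg {\<beta>})" "coprime p (card (generate Xg {\<beta>}))"
    using cards assms(1,2) prime_gt_0_nat by (auto intro: card_ge_0_finite)
  have N: "\<not> q dvd card P" "\<not> p dvd card Q"
    unfolding assms(9,12) using prime_not_dvd_prime_power assms(1,2,5) by metis+
  have "generate Xg {\<beta>} \<subseteq> Q" "generate Xg {\<alpha>} \<subseteq> P"
    using assms(18,19) unfolding sub_center_def by blast+
  then show ?thesis
    using prime_power_subgroup_conj_into_normal_factor[OF SQ assms(16) T(1,2) SP assms(17)]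
      amalgamated_product.prime_power_subgroup_conj_into_normal_factor
        [OF AB(2) SP assms(17) T(3,4) SQ assms(16)]
      N assms(1,2) by blast
qed

end
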